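(* Let $\Lambda,\Gamma\in\mathcal D_n^+$ and let $f,g:\mathcal D_n^+\to\mathcal D_n^+$ be stable mappings. Then the mappings $\Delta\mapsto\Lambda f(\Gamma\Delta)$, $\Delta\mapsto f(\Delta)^{-1}$, $f\circ g$ and $f+g$ are all stable mappings.
   Context: $\mathcal D_n^+$ is the set of $n\times n$ diagonal matrices with positive diagonal entries; $d_s(\Delta,\Delta')=\max_i\frac{|\Delta_i-\Delta'_i|}{\sqrt{\Delta_i\Delta'_i}}$. A mapping $f:\mathcal D_n^+\to\mathcal D_n^+$ is stable if $d_s(f(\Delta),f(\Delta'))\le d_s(\Delta,\Delta')$ for all $\Delta,\Delta'\in\mathcal D_n^+$. *)

theory Defs
  imports "HOL-Analysis.Analysis"
begin

definition diag_pos :: "(real^'n^'n) set" where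
  "diag_pos = {D. (\<forall>i j. i \<noteq> j \<longrightarrow> D$i$j = 0) \<and> (\<forall>i. 0 < D$i$i)}"

definition d_s :: "real^'n^'n \<Rightarrow> real^'n^'n \<Rightarrow> real" where
  "d_s D D' = Max (range (\<lambda>i. \<bar>D$i$i - D'$i$i\<bar> / sqrt (D$i$i * D'$i$i)))"

definition stable :: "(real^'n^'n \<Rightarrow> real^'n^'n) \<Rightarrow> bool" where
  "stable f \<longleftrightarrow> (\<forall>D\<in>diag_pos. f D \<in> diag_pos) \<and>
     (\<forall>D\<in>diag_pos. \<forall>D'\<in>diag_pos. d_s (f D) (f D') \<le> d_s D D')"

end

theory Submission
  imports Defs
begin

text \<open>The distance d_s is the maximum over the diagonal of the scalar distance
  |a - b| / sqrt(a b), which is invariant under a common nonzero scaling and under inversion.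
  Hence left multiplication by an element of D_n^+ and matrix inversion are d_s-isometries of
  D_n^+, and stability is closed under composition. For sums, Cauchy-Schwarz gives
  sqrt(a b) + sqrt(c d) \<le> sqrt((a + c)(b + d)), so the scalar distance of a sum of two pairs
  is at most the larger of their distances.\<close>

definition d_s_real :: "real \<Rightarrow> real \<Rightarrow> real" where
  "d_s_real a b = \<bar>a - b\<bar> / sqrt (a * b)"

lemma d_s_real_mult_left:
  assumes "c \<noteq> 0"
  shows "d_s_real (c * a) (c * b) = d_s_real a b"
proof -
  have "c * a * (c * b) = (c * c) * (a * b)"
    by (simp add: mult_ac)
  then have "sqrt (c * a * (c * b)) = \<bar>c\<bar> * sqrt (a * b)"
    by (simp add: real_sqrt_mult)
  moreover have "\<bar>c * a - c * b\<bar> = \<bar>c\<bar> * \<bar>a - b\<bar>"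
    by (simp add: abs_mult right_diff_distrib[symmetric])
  ultimately show ?thesis
    using assms by (simp add: d_s_real_def)
qed

lemma d_s_real_inverse: "d_s_real (inverse a) (inverse b) = d_s_real a b"
proof (cases "a = 0 \<or> b = 0")
  case True
  then show ?thesis by (auto simp: d_s_real_def)
next
  case False
  define s where "s = sqrt (a * b)"
  have "s \<noteq> 0" "s * s = \<bar>a * b\<bar>"
    using False by (simp_all add: s_def)
  have "d_s_real (inverse a) (inverse b) = (\<bar>a - b\<bar> / \<bar>a * b\<bar>) / inverse s"
    using False by (simp add: d_s_real_def s_def inverse_diff_inverse abs_mult abs_minus_commute
        divide_inverse real_sqrt_inverse[symmetric] mult.commute)
  also have "\<dots> = \<bar>a - b\<bar> / s"
    using \<open>s \<noteq> 0\<close> by (simp add: \<open>s * s = \<bar>a * b\<bar>\<close>[symmetric] field_simps)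
  finally show ?thesis
    by (simp add: d_s_real_def s_def)
qed

lemma sqrt_mult_add_le:
  fixes a b c d :: real
  assumes "0 \<le> a" "0 \<le> b" "0 \<le> c" "0 \<le> d"
  shows "sqrt (a * b) + sqrt (c * d) \<le> sqrt ((a + c) * (b + d))"
proof (rule real_le_rsqrt)
  have "2 * sqrt ((a * d) * (c * b)) \<le> a * d + c * b"
    using arith_geo_mean_sqrt[of "a * d" "c * b"] assms by simp
  moreover have "sqrt (a * b) * sqrt (c * d) = sqrt ((a * d) * (c * b))"
    by (simp add: real_sqrt_mult[symmetric] mult_ac)
  ultimately show "(sqrt (a * b) + sqrt (c * d))\<^sup>2 \<le> (a + c) * (b + d)"
    using assms by (simp add: power2_eq_square algebra_simps)
qed

lemma d_s_real_add_le:
  assumes "0 < a" "0 < b" "0 < c" "0 < d"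
  shows "d_s_real (a + c) (b + d) \<le> max (d_s_real a b) (d_s_real c d)"
proof -
  define M where "M = max (d_s_real a b) (d_s_real c d)"
  have "M \<ge> 0"
    using assms by (simp add: M_def d_s_real_def le_max_iff_disj)
  have "\<bar>a - b\<bar> = d_s_real a b * sqrt (a * b)" "\<bar>c - d\<bar> = d_s_real c d * sqrt (c * d)"
    using assms by (simp_all add: d_s_real_def)
  then have "\<bar>a - b\<bar> \<le> M * sqrt (a * b)" "\<bar>c - d\<bar> \<le> M * sqrt (c * d)"
    using assms unfolding M_def by (simp_all add: mult_right_mono)
  then have "\<bar>(a + c) - (b + d)\<bar> \<le> M * (sqrt (a * b) + sqrt (c * d))"
    by (simp add: distrib_left)
  also have "\<dots> \<le> M * sqrt ((a + c) * (b + d))"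
    using \<open>M \<ge> 0\<close> assms sqrt_mult_add_le[of a b c d] by (simp add: mult_left_mono)
  finally show ?thesis
    unfolding M_def[symmetric] d_s_real_def[of "a + c"] using assms by (simp add: pos_divide_le_eq)
qed

lemma d_s_eq_Max: "d_s D D' = Max (range (\<lambda>i. d_s_real (D$i$i) (D'$i$i)))"
  by (simp add: d_s_def d_s_real_def)

lemma d_s_le_iff: "d_s D D' \<le> c \<longleftrightarrow> (\<forall>i. d_s_real (D$i$i) (D'$i$i) \<le> c)"
  unfolding d_s_eq_Max by (subst Max_le_iff) auto

lemma d_s_cong:
  assumes "\<And>i. d_s_real (X$i$i) (Y$i$i) = d_s_real (D$i$i) (D'$i$i)"
  shows "d_s X Y = d_s D D'"
  unfolding d_s_eq_Max assms ..

lemma diagonal_matrix_mult_nth: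
  fixes A B :: "'a::semiring_1^'n^'n"
  assumes "\<And>i j. i \<noteq> j \<Longrightarrow> A$i$j = 0"
  shows "(A ** B)$i$j = A$i$i * B$i$j"
proof -
  have "(A ** B)$i$j = (\<Sum>k\<in>UNIV. A$i$k * B$k$j)"
    by (simp add: matrix_matrix_mult_def)
  also have "\<dots> = (\<Sum>k\<in>UNIV. if k = i then A$i$i * B$i$j else 0)"
    using assms by (intro sum.cong) auto
  finally show ?thesis by simp
qed

lemma diag_pos_nth:
  assumes "D \<in> diag_pos"
  shows "i \<noteq> j \<Longrightarrow> D$i$j = 0" and "0 < D$i$i" and "D$i$i \<noteq> 0"
  using assms by (auto simp: diag_pos_def) (metis less_irrefl)

lemma diag_pos_mult:
  assumes "A \<in> diag_pos" "B \<in> diag_pos"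
  shows "A ** B \<in> diag_pos"
  using assms by (simp add: diag_pos_def diagonal_matrix_mult_nth)

lemma d_s_mult_left:
  assumes "A \<in> diag_pos"
  shows "d_s (A ** X) (A ** Y) = d_s X Y"
  using assms by (intro d_s_cong) (simp add: diag_pos_nth diagonal_matrix_mult_nth d_s_real_mult_left)

lemma matrix_inv_eqI:
  fixes A :: "'a::comm_semiring_1^'n^'n"
  assumes "A ** B = mat 1" "B ** A = mat 1"
  shows "matrix_inv A = B"
proof -
  have inv: "A ** matrix_inv A = mat 1"
    unfolding matrix_inv_def by (rule someI2[of _ B]) (simp_all add: assms)
  have "matrix_inv A = (B ** A) ** matrix_inv A"
    using assms by simp
  also have "\<dots> = B"
    by (simp add: matrix_mul_assoc[symmetric] inv)
  finally show ?thesis .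
qed

lemma matrix_inv_diag_pos:
  assumes "D \<in> diag_pos"
  shows "matrix_inv D = (\<chi> i j. if i = j then inverse (D$i$i) else 0)"
proof (rule matrix_inv_eqI)
  show "D ** (\<chi> i j. if i = j then inverse (D$i$i) else 0) = mat 1"
    using assms by (auto simp: vec_eq_iff diag_pos_nth diagonal_matrix_mult_nth mat_def)
  show "(\<chi> i j. if i = j then inverse (D$i$i) else 0) ** D = mat 1"
    using assms by (auto simp: vec_eq_iff diag_pos_nth diagonal_matrix_mult_nth mat_def)
qed

lemma diag_pos_matrix_inv: "D \<in> diag_pos \<Longrightarrow> matrix_inv D \<in> diag_pos"
  by (simp add: matrix_inv_diag_pos) (simp add: diag_pos_def)

lemma d_s_matrix_inv:
  assumes "D \<in> diag_pos" "D' \<in> diag_pos"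
  shows "d_s (matrix_inv D) (matrix_inv D') = d_s D D'"
  using assms by (intro d_s_cong) (simp add: matrix_inv_diag_pos d_s_real_inverse)

lemma stable_isometry:
  assumes "\<And>D. D \<in> diag_pos \<Longrightarrow> h D \<in> diag_pos"
    and "\<And>D D'. D \<in> diag_pos \<Longrightarrow> D' \<in> diag_pos \<Longrightarrow> d_s (h D) (h D') = d_s D D'"
  shows "stable h"
  using assms by (simp add: stable_def)

lemma stable_mult_left: "\<Lambda> \<in> diag_pos \<Longrightarrow> stable (\<lambda>D. \<Lambda> ** D)"
  by (intro stable_isometry) (simp_all add: diag_pos_mult d_s_mult_left)

lemma stable_matrix_inv: "stable matrix_inv"
  by (intro stable_isometry) (simp_all add: diag_pos_matrix_inv d_s_matrix_inv)

lemma stable_comp: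
  fixes f g :: "real^'n^'n \<Rightarrow> real^'n^'n"
  assumes f: "stable f" and g: "stable g"
  shows "stable (f \<circ> g)"
  unfolding stable_def
proof (intro conjI ballI)
  fix D :: "real^'n^'n"
  assume "D \<in> diag_pos"
  then show "(f \<circ> g) D \<in> diag_pos"
    using f g by (simp add: stable_def)
next
  fix D D' :: "real^'n^'n"
  assume "D \<in> diag_pos" "D' \<in> diag_pos"
  then have "d_s (f (g D)) (f (g D')) \<le> d_s (g D) (g D')" "d_s (g D) (g D') \<le> d_s D D'"
    using f g by (simp_all add: stable_def)
  then show "d_s ((f \<circ> g) D) ((f \<circ> g) D') \<le> d_s D D'"
    by simp
qed

lemma stable_add:
  fixes f g :: "real^'n^'n \<Rightarrow> real^'n^'n"
  assumes f: "stable f" and g: "stable g"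
  shows "stable (\<lambda>D. f D + g D)"
  unfolding stable_def
proof (intro conjI ballI)
  fix D :: "real^'n^'n"
  assume "D \<in> diag_pos"
  then have "f D \<in> diag_pos" "g D \<in> diag_pos"
    using f g by (simp_all add: stable_def)
  then show "f D + g D \<in> diag_pos"
    by (simp add: diag_pos_def add_pos_pos)
next
  fix D D' :: "real^'n^'n"
  assume D: "D \<in> diag_pos" and D': "D' \<in> diag_pos"
  then have pos: "f D \<in> diag_pos" "f D' \<in> diag_pos" "g D \<in> diag_pos" "g D' \<in> diag_pos"
    using f g by (simp_all add: stable_def)
  have "d_s (f D) (f D') \<le> d_s D D'" "d_s (g D) (g D') \<le> d_s D D'"
    using f g D D' by (simp_all add: stable_def)
  then show "d_s (f D + g D) (f D' + g D') \<le> d_s D D'"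
    using pos unfolding d_s_le_iff
    by (auto simp: diag_pos_nth intro!: order_trans[OF d_s_real_add_le])
qed

theorem mainTheorem6:
  fixes \<Lambda> \<Gamma> :: "real^'n^'n"
    and f g :: "real^'n^'n \<Rightarrow> real^'n^'n"
  assumes "\<Lambda> \<in> diag_pos" and "\<Gamma> \<in> diag_pos"
    and "stable f" and "stable g"
  shows "stable (\<lambda>D. \<Lambda> ** f (\<Gamma> ** D)) \<and> stable (\<lambda>D. matrix_inv (f D))
    \<and> stable (f \<circ> g) \<and> stable (\<lambda>D. f D + g D)"
proof (intro conjI)
  have "(\<lambda>D. \<Lambda> ** f (\<Gamma> ** D)) = (\<lambda>D. \<Lambda> ** D) \<circ> f \<circ> (\<lambda>D. \<Gamma> ** D)"
    by auto
  then show "stable (\<lambda>D. \<Lambda> ** f (\<Gamma> ** D))"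
    using assms by (simp only: stable_comp stable_mult_left)
  have "(\<lambda>D. matrix_inv (f D)) = matrix_inv \<circ> f"
    by auto
  then show "stable (\<lambda>D. matrix_inv (f D))"
    using assms by (simp only: stable_comp stable_matrix_inv)
  show "stable (f \<circ> g)"
    using assms(3,4) by (rule stable_comp)
  show "stable (\<lambda>D. f D + g D)"
    using assms(3,4) by (rule stable_add)
qed

end
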